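(* The discrete comparison principle holds on $G^h$ for the discrete obstacle problem $F^{W,h}$: for all $u,v\in C(G^h)$, if $F^{W,h}[u](x)\le F^{W,h}[v](x)$ for all $x\in G^h$, then $u\le v$ on $G^h$.
   Context: Let $\Omega\subset D=[-1,1]^n$, $h>0$, $g\in C(G^h)$. Grid: $G^h=\{x\in h\mathbb{Z}^n: x\in D\}$, $G^h_V=\Omega\cap G^h$, $\partial G^h=G^h\setminus G^h_V$; $C(G^h)$ is the set of functions $G^h\to\mathbb{R}$. A grid direction set $\mathcal{D}^W$ is a finite set of nonzero vectors of $\mathbb{Z}^n$ spanning $\mathbb{R}^n$ and closed under $v\mapsto-v$; $h$ is assumed small enough that $x\pm hv\in G^h$ for all $x\in G^h_V$, $v\in\mathcal{D}^W$. For $v\in\mathcal{D}^W$, $D^h_{vv}u(x)=\frac{u(x+hv)-2u(x)+u(x-hv)}{h^2\|v\|^2}$ ($x\in G^h_V$), $\lambda^h_{\mathcal{D}^W}[u](x)=\min_{v\in\mathcal{D}^W}D^h_{vv}u(x)$, and $F^{W,h}[u](x)=\max\{u(x)-g(x),-\lambda^h_{\mathcal{D}^W}[u](x)\}$ for $x\in G^h_V$, $F^{W,h}[u](x)=u(x)-g(x)$ for $x\in\partial G^h$. *)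

theory Defs
  imports "HOL-Analysis.Analysis"
begin

definition cube :: "(real^'n) set" where
  "cube = {x. \<forall>i. -1 \<le> x$i \<and> x$i \<le> 1}"

definition grid :: "real \<Rightarrow> (real^'n) set" where
  "grid h = {x. (\<forall>i. \<exists>k::int. x$i = h * of_int k) \<and> x \<in> cube}"

definition grid_int :: "(real^'n) set \<Rightarrow> real \<Rightarrow> (real^'n) set" where
  "grid_int \<Omega> h = \<Omega> \<inter> grid h"

definition grid_bdry :: "(real^'n) set \<Rightarrow> real \<Rightarrow> (real^'n) set" where
  "grid_bdry \<Omega> h = grid h - grid_int \<Omega> h"

definition grid_direction_set :: "(real^'n) set \<Rightarrow> bool" where
  "grid_direction_set W \<longleftrightarrow> finite W \<and> 0 \<notin> W \<and> (\<forall>v\<in>W. \<forall>i. v$i \<in> \<int>)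
     \<and> span W = UNIV \<and> (\<forall>v\<in>W. -v \<in> W)"

definition Dvv :: "real \<Rightarrow> (real^'n \<Rightarrow> real) \<Rightarrow> real^'n \<Rightarrow> real^'n \<Rightarrow> real" where
  "Dvv h u v x = (u (x + h *\<^sub>R v) - 2 * u x + u (x - h *\<^sub>R v)) / (h\<^sup>2 * (norm v)\<^sup>2)"

definition lambda_h :: "(real^'n) set \<Rightarrow> real \<Rightarrow> (real^'n \<Rightarrow> real) \<Rightarrow> real^'n \<Rightarrow> real" where
  "lambda_h W h u x = Min ((\<lambda>v. Dvv h u v x) ` W)"

definition F_obst :: "(real^'n) set \<Rightarrow> (real^'n) set \<Rightarrow> (real^'n \<Rightarrow> real) \<Rightarrow> real
    \<Rightarrow> (real^'n \<Rightarrow> real) \<Rightarrow> real^'n \<Rightarrow> real" where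
  "F_obst W \<Omega> g h u x =
     (if x \<in> grid_int \<Omega> h then max (u x - g x) (- lambda_h W h u x) else u x - g x)"

end

theory Submission
  imports Defs
begin

text \<open>Suppose \<open>u - v\<close> attains a positive maximum on the finite grid, and let \<open>x\<close> be a
  maximiser of largest Euclidean norm. At a boundary node \<open>F[u] \<le> F[v]\<close> reads \<open>u \<le> v\<close>, so \<open>x\<close>
  is interior. There \<open>u x - g x > v x - g x\<close> forces \<open>F[v](x) = -\<lambda>[v](x)\<close> and hence
  \<open>\<lambda>[u](x) \<ge> \<lambda>[v](x)\<close>, while \<open>D\<^sub>v\<^sub>v u(x) \<le> D\<^sub>v\<^sub>v v(x)\<close> holds in every direction at a
  maximum of \<open>u - v\<close>. In a direction \<open>d\<close> realising \<open>\<lambda>[v](x)\<close> both second differences then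
  agree, so \<open>x \<plusminus> h d\<close> are maximisers too; by the parallelogram law one of them has larger norm
  than \<open>x\<close>.\<close>

lemma finite_grid:
  assumes "h > 0"
  shows "finite (grid h :: (real^'n) set)"
proof -
  define N where "N = \<lceil>1 / h\<rceil>"
  define S where "S = (\<lambda>k::int. h * of_int k) ` {-N..N}"
  have coords: "x $ i \<in> S" if "x \<in> grid h" for x :: "real^'n" and i
  proof -
    from that obtain k :: int where k: "x $ i = h * of_int k" and "-1 \<le> x $ i" "x $ i \<le> 1"
      unfolding grid_def cube_def by blast
    then have "\<bar>of_int k\<bar> \<le> 1 / h"
      using assms by (simp add: abs_mult field_simps)
    also have "\<dots> \<le> of_int N"
      unfolding N_def by (rule le_of_int_ceiling)
    finally have "k \<in> {-N..N}"
      by auto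
    then show ?thesis
      unfolding S_def k by (rule imageI)
  qed
  have "grid h \<subseteq> (\<lambda>f. \<chi> i. f i) ` (PiE UNIV (\<lambda>_::'n. S))"
  proof
    fix x :: "real^'n"
    assume "x \<in> grid h"
    then have "(\<lambda>i. x $ i) \<in> PiE UNIV (\<lambda>_. S)"
      using coords by auto
    moreover have "x = (\<chi> i. x $ i)"
      by simp
    ultimately show "x \<in> (\<lambda>f. \<chi> i. f i) ` (PiE UNIV (\<lambda>_::'n. S))"
      by blast
  qed
  moreover have "finite ((\<lambda>f. \<chi> i. f i) ` (PiE UNIV (\<lambda>_::'n. S)))"
    unfolding S_def by (intro finite_imageI finite_PiE) auto
  ultimately show ?thesis
    by (rule finite_subset)
qed

lemma grid_direction_set_nonempty:
  assumes "grid_direction_set (W :: (real^'n) set)"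
  shows "W \<noteq> {}"
proof
  assume "W = {}"
  then have "(UNIV :: (real^'n) set) = {0}"
    using assms unfolding grid_direction_set_def by simp
  then have "axis undefined (1::real) = (0 :: real^'n)"
    by blast
  then show False
    by simp
qed

lemma Dvv_diff: "Dvv h u d x - Dvv h v d x = Dvv h (\<lambda>y. u y - v y) d x"
  unfolding Dvv_def by (simp add: diff_divide_distrib [symmetric] algebra_simps)

lemma Dvv_le_0_at_max:
  assumes "w (x + h *\<^sub>R d) \<le> w x" and "w (x - h *\<^sub>R d) \<le> w x"
  shows "Dvv h w d x \<le> 0"
  unfolding Dvv_def using assms by (intro divide_nonpos_nonneg) auto

lemma Dvv_eq_0_at_max:
  assumes "h \<noteq> 0" and "d \<noteq> 0"
    and "w (x + h *\<^sub>R d) \<le> w x" and "w (x - h *\<^sub>R d) \<le> w x"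
    and "Dvv h w d x = 0"
  shows "w (x + h *\<^sub>R d) = w x \<and> w (x - h *\<^sub>R d) = w x"
proof -
  have "h\<^sup>2 * (norm d)\<^sup>2 \<noteq> 0"
    using assms(1,2) by simp
  then have "w (x + h *\<^sub>R d) - 2 * w x + w (x - h *\<^sub>R d) = 0"
    using assms(5) unfolding Dvv_def by simp
  then show ?thesis
    using assms(3,4) by linarith
qed

lemma Min_image_eq_imp_ex_eq:
  fixes f g :: "'a \<Rightarrow> 'b::linorder"
  assumes "finite A" and "A \<noteq> {}"
    and "\<And>a. a \<in> A \<Longrightarrow> f a \<le> g a"
    and "Min (g ` A) \<le> Min (f ` A)"
  shows "\<exists>a\<in>A. f a = g a"
proof -
  have "Min (g ` A) \<in> g ` A"
    using assms(1,2) by simp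
  then obtain a where a: "a \<in> A" "g a = Min (g ` A)"
    by auto
  have "Min (f ` A) \<le> f a"
    using assms(1) a(1) by simp
  then show ?thesis
    using a assms(3,4) by (metis order_antisym order_trans)
qed

lemma vector_eq_0_if_norm_add_le_norm_diff_le:
  fixes x y :: "'a::real_inner"
  assumes "norm (x + y) \<le> norm x" and "norm (x - y) \<le> norm x"
  shows "y = 0"
proof -
  have "(norm (x + y))\<^sup>2 + (norm (x - y))\<^sup>2 = 2 * (norm x)\<^sup>2 + 2 * (norm y)\<^sup>2"
    unfolding power2_norm_eq_inner
    by (simp add: inner_add_left inner_add_right inner_diff_left inner_diff_right inner_commute)
  moreover have "(norm (x + y))\<^sup>2 \<le> (norm x)\<^sup>2" and "(norm (x - y))\<^sup>2 \<le> (norm x)\<^sup>2"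
    using assms by (simp_all add: power_mono)
  ultimately have "(norm y)\<^sup>2 \<le> 0"
    by linarith
  then show ?thesis
    by simp
qed

lemma finite_ex_max_image:
  fixes f :: "'a \<Rightarrow> 'b::linorder"
  assumes "finite S" and "S \<noteq> {}"
  shows "\<exists>x\<in>S. \<forall>z\<in>S. f z \<le> f x"
proof -
  have "Max (f ` S) \<in> f ` S"
    using assms by simp
  then obtain x where "x \<in> S" "f x = Max (f ` S)"
    by auto
  then show ?thesis
    using assms(1) by (metis Max_ge finite_imageI imageI)
qed

lemma finite_ex_max_of_max_norm:
  fixes w :: "'a::real_normed_vector \<Rightarrow> real"
  assumes "finite S" and "S \<noteq> {}"
  obtains x where "x \<in> S" and "\<forall>z\<in>S. w z \<le> w x"
    and "\<forall>z\<in>S. w z = w x \<longrightarrow> norm z \<le> norm x"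
proof -
  obtain x\<^sub>0 where "x\<^sub>0 \<in> S" and max: "\<forall>z\<in>S. w z \<le> w x\<^sub>0"
    using finite_ex_max_image [OF assms] by blast
  define A where "A = {z \<in> S. w z = w x\<^sub>0}"
  have "finite A" and "A \<noteq> {}"
    using assms(1) \<open>x\<^sub>0 \<in> S\<close> unfolding A_def by auto
  then obtain x where "x \<in> A" and "\<forall>z\<in>A. norm z \<le> norm x"
    using finite_ex_max_image [of A norm] by blast
  then show ?thesis
    using that max unfolding A_def by auto
qed

lemma max_of_diff_propagates:
  fixes \<Omega> W :: "(real^'n) set" and g u v :: "real^'n \<Rightarrow> real"
  assumes "h > 0" and W: "grid_direction_set W"
    and x: "x \<in> grid_int \<Omega> h"
    and nbrs: "\<forall>d\<in>W. x + h *\<^sub>R d \<in> grid h \<and> x - h *\<^sub>R d \<in> grid h"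
    and max: "\<forall>y\<in>grid h. u y - v y \<le> u x - v x"
    and "v x < u x"
    and F: "F_obst W \<Omega> g h u x \<le> F_obst W \<Omega> g h v x"
  shows "\<exists>d\<in>W. d \<noteq> 0 \<and> u (x + h *\<^sub>R d) - v (x + h *\<^sub>R d) = u x - v x
                       \<and> u (x - h *\<^sub>R d) - v (x - h *\<^sub>R d) = u x - v x"
proof -
  define w where "w y = u y - v y" for y
  have fin: "finite W" and W0: "0 \<notin> W" and "W \<noteq> {}"
    using W grid_direction_set_nonempty unfolding grid_direction_set_def by auto
  have w_le: "w (x + h *\<^sub>R d) \<le> w x \<and> w (x - h *\<^sub>R d) \<le> w x" if "d \<in> W" for d
    using max nbrs that unfolding w_def by auto
  have Dvv_le: "Dvv h u d x \<le> Dvv h v d x" if "d \<in> W" for d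
    using Dvv_le_0_at_max [of w x h d] w_le [OF that] Dvv_diff [of h u d x v]
    unfolding w_def by simp
  have "max (u x - g x) (- lambda_h W h u x) \<le> max (v x - g x) (- lambda_h W h v x)"
    using F x unfolding F_obst_def by simp
  \<comment> \<open>the obstacle branch cannot be active for \<open>v\<close>, since \<open>u x - g x > v x - g x\<close>\<close>
  then have "lambda_h W h v x \<le> lambda_h W h u x"
    using \<open>v x < u x\<close> by (auto simp: max_def split: if_splits)
  then have "\<exists>d\<in>W. Dvv h u d x = Dvv h v d x"
    unfolding lambda_h_def
    by (intro Min_image_eq_imp_ex_eq [of W "\<lambda>d. Dvv h u d x" "\<lambda>d. Dvv h v d x"] fin
        \<open>W \<noteq> {}\<close> Dvv_le)
  then obtain d where d: "d \<in> W" "Dvv h u d x = Dvv h v d x"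
    by blast
  have "d \<noteq> 0"
    using d(1) W0 by auto
  moreover have "Dvv h w d x = 0"
    using d(2) Dvv_diff [of h u d x v] unfolding w_def by simp
  ultimately have "w (x + h *\<^sub>R d) = w x \<and> w (x - h *\<^sub>R d) = w x"
    using Dvv_eq_0_at_max [of h d w x] w_le [OF d(1)] \<open>h > 0\<close> by simp
  then show ?thesis
    using d(1) \<open>d \<noteq> 0\<close> unfolding w_def by blast
qed

theorem mainTheorem6:
  fixes \<Omega> W :: "(real^'n) set" and h :: real and g u v :: "real^'n \<Rightarrow> real"
  assumes "\<Omega> \<subseteq> cube"
    and "h > 0"
    and "grid_direction_set W"
    and "\<forall>x\<in>grid_int \<Omega> h. \<forall>d\<in>W. x + h *\<^sub>R d \<in> grid h \<and> x - h *\<^sub>R d \<in> grid h"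
    and "\<forall>x\<in>grid h. F_obst W \<Omega> g h u x \<le> F_obst W \<Omega> g h v x"
  shows "\<forall>x\<in>grid h. u x \<le> v x"
proof (rule ccontr)
  assume "\<not> ?thesis"
  then obtain y where y: "y \<in> grid h" "v y < u y" by auto
  obtain x where x: "x \<in> grid h" and max: "\<forall>z\<in>grid h. u z - v z \<le> u x - v x"
    and far: "\<forall>z\<in>grid h. u z - v z = u x - v x \<longrightarrow> norm z \<le> norm x"
    using finite_ex_max_of_max_norm [OF finite_grid [OF assms(2)], where w = "\<lambda>z. u z - v z"] y(1)
    by blast
  have "v x < u x"
    using max y by fastforce
  have "x \<in> grid_int \<Omega> h"
  proof (rule ccontr)
    assume "x \<notin> grid_int \<Omega> h"
    then have "u x - g x \<le> v x - g x"
      using assms(5) x unfolding F_obst_def by auto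
    then show False
      using \<open>v x < u x\<close> by simp
  qed
  moreover have nbrs: "\<forall>d\<in>W. x + h *\<^sub>R d \<in> grid h \<and> x - h *\<^sub>R d \<in> grid h"
    using assms(4) \<open>x \<in> grid_int \<Omega> h\<close> by blast
  moreover have "F_obst W \<Omega> g h u x \<le> F_obst W \<Omega> g h v x"
    using assms(5) x by blast
  ultimately obtain d where "d \<in> W" "d \<noteq> 0"
    and "u (x + h *\<^sub>R d) - v (x + h *\<^sub>R d) = u x - v x"
    and "u (x - h *\<^sub>R d) - v (x - h *\<^sub>R d) = u x - v x"
    using max_of_diff_propagates [OF assms(2,3) _ _ max \<open>v x < u x\<close>] by blast
  then have "h *\<^sub>R d = 0"
    using far nbrs by (intro vector_eq_0_if_norm_add_le_norm_diff_le) auto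
  then show False
    using \<open>d \<noteq> 0\<close> assms(2) by simp
qed

end
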